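(* If $2\le n\le 3$, then $\mathrm{A}=\mathrm{Q}=\mathrm{P}=\mathrm{Z}^\times(\mathrm{C}^{\times(0)}\cup\mathrm{C}^{\times(1)})$. If $n=4$, then $\mathrm{Q}\neq\mathrm{A}$.
   Context: Let $\mathrm{C}$ be either the real Clifford algebra $C\ell_{p,q}$ with $p+q=n$, or the complex Clifford algebra $C\ell(\mathbb{C}^n)$. It has identity $e$ and generators $e_1,\dots,e_n$ satisfying $e_ae_b+e_be_a=2\eta_{ab}e$. In the real case $\eta=\mathrm{diag}(1,\dots,1,-1,\dots,-1)$ with $p$ entries $+1$ and $q$ entries $-1$. In the complex case $\eta=I_n$. $\mathrm{C}^k$ is the grade-$k$ subspace, spanned by the products $e_{a_1}\cdots e_{a_k}$ with $a_1<\dots<a_k$. The even subspace is $\mathrm{C}^{(0)}=\bigoplus_{k\text{ even}}\mathrm{C}^k$ and the odd subspace is $\mathrm{C}^{(1)}=\bigoplus_{k\text{ odd}}\mathrm{C}^k$. The reversion $U\mapsto\tilde U$ is the linear anti-automorphism acting on $\mathrm{C}^k$ as $(-1)^{k(k-1)/2}$. For $S\subseteq\mathrm{C}$, $S^\times$ is the set of elements of $S$ invertible in $\mathrm{C}$, and $\mathrm{C}^{\times(j)}:=(\mathrm{C}^{(j)})^\times$. $\mathrm{Z}$ is the center: $\mathrm{Z}=\mathrm{C}^0$ for $n$ even and $\mathrm{Z}=\mathrm{C}^0\oplus\mathrm{C}^n$ for $n$ odd. Define: <ul> <li>$\mathrm{P}:=\mathrm{Z}^\times(\mathrm{C}^{\times(0)}\cup\mathrm{C}^{\times(1)})=\{WT: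 W\in\mathrm{Z}^\times, T\in\mathrm{C}^{\times(0)}\cup\mathrm{C}^{\times(1)}\}$;</li> <li>$\mathrm{A}:=\{T\in\mathrm{C}^\times:\tilde TT\in\mathrm{Z}^\times\}$;</li> <li>$\mathrm{Q}:=\{T\in\mathrm{P}:\tilde TT\in\mathrm{Z}^\times\}$.</li> </ul> *)

theory Defs
  imports Complex_Main
begin

text \<open>
  Concrete model of the Clifford algebra with n generators e_0,...,e_{n-1}
  (0-indexed) over a coefficient field 'a, with diagonal metric eta
  (e_i e_i = eta i, e_i e_j = - e_j e_i for i /= j).
  An element is a coefficient function on blades, i.e. on subsets of {..<n};
  the element x represents  sum over A of  x A * e_A,  where e_A is the
  increasingly ordered product of the generators indexed by A.
\<close>

type_synonym 'a mv = "nat set \<Rightarrow> 'a"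

definition cl :: "nat \<Rightarrow> 'a::field mv set" where
  "cl n = {x. \<forall>A. x A \<noteq> 0 \<longrightarrow> A \<subseteq> {..<n}}"

text \<open>Sign and metric factor in e_A e_B = bsign eta A B * e_(A symdiff B).\<close>
definition bsign :: "(nat \<Rightarrow> 'a::field) \<Rightarrow> nat set \<Rightarrow> nat set \<Rightarrow> 'a" where
  "bsign eta A B = (-1) ^ card {(a, b). a \<in> A \<and> b \<in> B \<and> b < a} * (\<Prod>i\<in>A \<inter> B. eta i)"

definition clmul :: "nat \<Rightarrow> (nat \<Rightarrow> 'a::field) \<Rightarrow> 'a mv \<Rightarrow> 'a mv \<Rightarrow> 'a mv" where
  "clmul n eta x y = (\<lambda>C. \<Sum>A\<in>Pow {..<n}. \<Sum>B\<in>Pow {..<n}.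
       if (A - B) \<union> (B - A) = C then x A * y B * bsign eta A B else 0)"

definition clone :: "'a::field mv" where
  "clone = (\<lambda>A. if A = {} then 1 else 0)"

definition clgen :: "nat \<Rightarrow> 'a::field mv" where
  "clgen i = (\<lambda>A. if A = {i} then 1 else 0)"

definition grade :: "nat \<Rightarrow> nat \<Rightarrow> 'a::field mv set" where
  "grade n k = {x \<in> cl n. \<forall>A. x A \<noteq> 0 \<longrightarrow> card A = k}"

definition even_part :: "nat \<Rightarrow> 'a::field mv set" where
  "even_part n = {x \<in> cl n. \<forall>A. x A \<noteq> 0 \<longrightarrow> even (card A)}"

definition odd_part :: "nat \<Rightarrow> 'a::field mv set" where
  "odd_part n = {x \<in> cl n. \<forall>A. x A \<noteq> 0 \<longrightarrow> odd (card A)}"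

definition clrev :: "'a::field mv \<Rightarrow> 'a mv" where
  "clrev x = (\<lambda>A. (-1) ^ (card A * (card A - 1) div 2) * x A)"

definition clinvertible :: "nat \<Rightarrow> (nat \<Rightarrow> 'a::field) \<Rightarrow> 'a mv \<Rightarrow> bool" where
  "clinvertible n eta x \<longleftrightarrow> x \<in> cl n \<and>
     (\<exists>y\<in>cl n. clmul n eta x y = clone \<and> clmul n eta y x = clone)"

definition units_in :: "nat \<Rightarrow> (nat \<Rightarrow> 'a::field) \<Rightarrow> 'a mv set \<Rightarrow> 'a mv set" where
  "units_in n eta S = {x \<in> S. clinvertible n eta x}"

definition clcenter :: "nat \<Rightarrow> (nat \<Rightarrow> 'a::field) \<Rightarrow> 'a mv set" where
  "clcenter n eta = {z \<in> cl n. \<forall>x\<in>cl n. clmul n eta z x = clmul n eta x z}"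

definition Pset :: "nat \<Rightarrow> (nat \<Rightarrow> 'a::field) \<Rightarrow> 'a mv set" where
  "Pset n eta = {clmul n eta w t | w t. w \<in> units_in n eta (clcenter n eta) \<and>
      t \<in> units_in n eta (even_part n) \<union> units_in n eta (odd_part n)}"

definition Aset :: "nat \<Rightarrow> (nat \<Rightarrow> 'a::field) \<Rightarrow> 'a mv set" where
  "Aset n eta = {t \<in> units_in n eta (cl n).
      clmul n eta (clrev t) t \<in> units_in n eta (clcenter n eta)}"

definition Qset :: "nat \<Rightarrow> (nat \<Rightarrow> 'a::field) \<Rightarrow> 'a mv set" where
  "Qset n eta = {t \<in> Pset n eta.
      clmul n eta (clrev t) t \<in> units_in n eta (clcenter n eta)}"

definition sig :: "nat \<Rightarrow> nat \<Rightarrow> 'a::field" where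
  "sig p i = (if i < p then 1 else -1)"

end

theory Submission
  imports Defs
begin

definition clscal :: "'a::field \<Rightarrow> 'a mv" where
  "clscal c = (\<lambda>A. if A = {} then c else 0)"

definition clscale :: "'a::field \<Rightarrow> 'a mv \<Rightarrow> 'a mv" where
  "clscale c x = (\<lambda>A. c * x A)"

definition even_comp :: "'a::field mv \<Rightarrow> 'a mv" where
  "even_comp x = (\<lambda>A. if even (card A) then x A else 0)"

definition odd_comp :: "'a::field mv \<Rightarrow> 'a mv" where
  "odd_comp x = (\<lambda>A. if odd (card A) then x A else 0)"

definition clnorm :: "nat \<Rightarrow> (nat \<Rightarrow> 'a::field) \<Rightarrow> 'a mv \<Rightarrow> 'a" where
  "clnorm n eta x = clmul n eta (clrev x) x {}"

definition scal_e012 :: "'a::field \<Rightarrow> 'a \<Rightarrow> 'a mv" where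
  "scal_e012 a b = (\<lambda>A. if A = {} then a else if A = {0, 1, 2} then b else 0)"

lemma clone_eq_clscal: "clone = clscal 1"
  by (simp add: clone_def clscal_def)

lemma clscal_in_cl: "clscal c \<in> cl n"
  and clscale_in_cl: "x \<in> cl n \<Longrightarrow> clscale c x \<in> cl n"
  and clrev_in_cl: "x \<in> cl n \<Longrightarrow> clrev x \<in> cl n"
  and clgen_in_cl: "i < n \<Longrightarrow> clgen i \<in> cl n"
  and scal_e012_in_cl: "3 \<le> n \<Longrightarrow> scal_e012 a b \<in> cl n"
  by (auto simp: cl_def clscal_def clscale_def clrev_def clgen_def scal_e012_def)

lemma even_comp_in_even_part: "x \<in> cl n \<Longrightarrow> even_comp x \<in> even_part n"
  and odd_comp_in_odd_part: "x \<in> cl n \<Longrightarrow> odd_comp x \<in> odd_part n"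
  by (auto simp: even_part_def odd_part_def cl_def even_comp_def odd_comp_def)

lemma cl_ext:
  assumes "x \<in> cl n" "y \<in> cl n" "\<And>A. A \<subseteq> {..<n} \<Longrightarrow> x A = y A"
  shows "x = y"
proof
  fix A show "x A = y A"
  proof (cases "A \<subseteq> {..<n}")
    case False
    with assms(1,2) have "x A = 0" "y A = 0" unfolding cl_def by blast+
    then show ?thesis by simp
  qed (rule assms(3))
qed

lemma clmul_apply:
  assumes "C \<subseteq> {..<n}"
  shows "clmul n eta x y C = (\<Sum>A\<in>Pow {..<n}. x A * y (sym_diff A C) * bsign eta A (sym_diff A C))"
  unfolding clmul_def
proof (rule sum.cong[OF refl])
  fix A assume "A \<in> Pow {..<n}"
  then have "sym_diff A C \<in> Pow {..<n}" using assms by auto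
  moreover have "sym_diff A B = C \<longleftrightarrow> B = sym_diff A C" for B by blast
  ultimately show "(\<Sum>B\<in>Pow {..<n}. if sym_diff A B = C then x A * y B * bsign eta A B else 0) =
      x A * y (sym_diff A C) * bsign eta A (sym_diff A C)"
    by (simp add: sum.delta')
qed

lemma clmul_apply_support:
  assumes "C \<subseteq> {..<n}" "S \<subseteq> Pow {..<n}" "\<And>A. x A \<noteq> 0 \<Longrightarrow> A \<in> S"
  shows "clmul n eta x y C = (\<Sum>A\<in>S. x A * y (sym_diff A C) * bsign eta A (sym_diff A C))"
  unfolding clmul_apply[OF assms(1)] using assms(2,3)
  by (intro sum.mono_neutral_right) auto

lemma clmul_apply_outside: "\<not> C \<subseteq> {..<n} \<Longrightarrow> clmul n eta x y C = 0"
  unfolding clmul_def by (intro sum.neutral ballI) auto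

lemma clmul_in_cl: "clmul n eta x y \<in> cl n"
  unfolding cl_def using clmul_apply_outside by blast

lemma bsign_empty_left [simp]: "bsign eta {} B = 1"
  and bsign_empty_right [simp]: "bsign eta A {} = 1"
  by (simp_all add: bsign_def)

lemma clmul_clscal_left:
  assumes "x \<in> cl n"
  shows "clmul n eta (clscal c) x = clscale c x"
proof (rule cl_ext[OF clmul_in_cl clscale_in_cl[OF assms]])
  fix C assume C: "C \<subseteq> {..<n}"
  have "clmul n eta (clscal c) x C = (\<Sum>A\<in>Pow {..<n}. if A = {} then c * x C else 0)"
    unfolding clmul_apply[OF C] by (rule sum.cong) (auto simp: clscal_def)
  then show "clmul n eta (clscal c) x C = clscale c x C"
    by (simp add: clscale_def)
qed

lemma clmul_clscal_right:
  assumes "x \<in> cl n"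
  shows "clmul n eta x (clscal c) = clscale c x"
proof (rule cl_ext[OF clmul_in_cl clscale_in_cl[OF assms]])
  fix C assume C: "C \<subseteq> {..<n}"
  have "clmul n eta x (clscal c) C = (\<Sum>A\<in>Pow {..<n}. if A = C then c * x C else 0)"
    unfolding clmul_apply[OF C] by (rule sum.cong) (auto simp: clscal_def)
  with C show "clmul n eta x (clscal c) C = clscale c x C"
    by (simp add: clscale_def)
qed

lemma clmul_clscale_left: "clmul n eta (clscale c x) y = clscale c (clmul n eta x y)"
  and clmul_clscale_right: "clmul n eta x (clscale c y) = clscale c (clmul n eta x y)"
  unfolding clmul_def clscale_def
  by (auto simp: sum_distrib_left mult_ac intro!: sum.cong)

lemma clscale_clscale [simp]: "clscale a (clscale b x) = clscale (a * b) x"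
  and clscale_one [simp]: "clscale 1 x = x"
  and clscale_clscal [simp]: "clscale a (clscal b) = clscal (a * b)"
  and clrev_clscal [simp]: "clrev (clscal c) = clscal c"
  and clrev_clscale: "clrev (clscale c x) = clscale c (clrev x)"
  by (auto simp: clscale_def clscal_def clrev_def)

lemma clmul_clscal_clscal [simp]: "clmul n eta (clscal a) (clscal b) = clscal (a * b)"
  by (simp add: clmul_clscal_left clscal_in_cl)

lemma clscale_in_center: "w \<in> clcenter n eta \<Longrightarrow> clscale c w \<in> clcenter n eta"
  unfolding clcenter_def by (auto simp: clscale_in_cl clmul_clscale_left clmul_clscale_right)

lemma clscal_in_center: "clscal c \<in> clcenter n eta"
  unfolding clcenter_def by (simp add: clscal_in_cl clmul_clscal_left clmul_clscal_right)

lemma clinvertible_clscal: "c \<noteq> 0 \<Longrightarrow> clinvertible n eta (clscal c)"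
  unfolding clinvertible_def clone_eq_clscal
  by (intro conjI bexI[of _ "clscal (1 / c)"]) (simp_all add: clscal_in_cl)

lemma clinvertible_clscal_nonzero:
  assumes "clinvertible n eta (clscal c)"
  shows "c \<noteq> 0"
proof
  assume "c = 0"
  obtain y where "y \<in> cl n" "clmul n eta (clscal c) y = clone"
    using assms unfolding clinvertible_def by blast
  then have "clscale 0 y = clone" using \<open>c = 0\<close> by (simp add: clmul_clscal_left)
  then have "clscale 0 y {} = clone {}" by simp
  then show False by (simp add: clscale_def clone_def)
qed

lemma clinvertible_rev_square:
  assumes "x \<in> cl n" "clmul n eta (clrev x) x = clscal c" "clmul n eta x (clrev x) = clscal c"
    "c \<noteq> 0"
  shows "clinvertible n eta x"
  unfolding clinvertible_def clone_eq_clscal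
  using assms by (intro conjI bexI[of _ "clscale (1 / c) (clrev x)"])
    (simp_all add: clmul_clscale_left clmul_clscale_right clscale_in_cl clrev_in_cl)

lemma clmul_clgen_right:
  assumes "C \<subseteq> {..<n}" "i < n"
  shows "clmul n eta x (clgen i) C = x (sym_diff C {i}) * bsign eta (sym_diff C {i}) {i}"
proof -
  have "clmul n eta x (clgen i) C =
      (\<Sum>A\<in>Pow {..<n}. if A = sym_diff C {i} then x A * bsign eta A {i} else 0)"
    unfolding clmul_apply[OF assms(1)] by (rule sum.cong) (auto simp: clgen_def)
  with assms show ?thesis by auto
qed

lemma clmul_clgen_left:
  assumes "C \<subseteq> {..<n}" "i < n"
  shows "clmul n eta (clgen i) x C = x (sym_diff {i} C) * bsign eta {i} (sym_diff {i} C)"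
proof -
  have "clmul n eta (clgen i) x C =
      (\<Sum>A\<in>Pow {..<n}. if A = {i} then x (sym_diff {i} C) * bsign eta {i} (sym_diff {i} C) else 0)"
    unfolding clmul_apply[OF assms(1)] by (rule sum.cong) (auto simp: clgen_def)
  with assms show ?thesis by auto
qed

lemma bsign_singleton_right:
  "bsign eta A {i} = (-1) ^ card {a\<in>A. i < a} * (if i \<in> A then eta i else 1)"
proof -
  have "{(a, b). a \<in> A \<and> b \<in> {i} \<and> b < a} = (\<lambda>a. (a, i)) ` {a\<in>A. i < a}" by auto
  then show ?thesis by (auto simp: bsign_def card_image inj_on_def Int_insert_right)
qed

lemma bsign_singleton_left:
  "bsign eta {i} B = (-1) ^ card {b\<in>B. b < i} * (if i \<in> B then eta i else 1)"
proof -
  have "{(a, b). a \<in> {i} \<and> b \<in> B \<and> b < a} = (\<lambda>b. (i, b)) ` {b\<in>B. b < i}" by auto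
  then show ?thesis by (auto simp: bsign_def card_image inj_on_def Int_insert_left)
qed

lemma clcenter_coeff_parity:
  fixes z :: "'a::field_char_0 mv"
  assumes z: "z \<in> clcenter n eta" and i: "i < n" "eta i \<noteq> 0" and zB: "z B \<noteq> 0"
  shows "even (card (B - {i}))"
proof -
  have B: "B \<subseteq> {..<n}" using z zB unfolding clcenter_def cl_def by blast
  define C where "C = sym_diff B {i}"
  have C: "C \<subseteq> {..<n}" using B i by (auto simp: C_def)
  have "clmul n eta z (clgen i) C = clmul n eta (clgen i) z C"
    using z clgen_in_cl[OF i(1)] unfolding clcenter_def by auto
  moreover have "sym_diff C {i} = B" "sym_diff {i} C = B" unfolding C_def by auto
  ultimately have "z B * bsign eta B {i} = z B * bsign eta {i} B"
    using C i by (simp add: clmul_clgen_left clmul_clgen_right)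
  then have signs: "(-1::'a) ^ card {a\<in>B. i < a} = (-1) ^ card {a\<in>B. a < i}"
    using zB i by (simp add: bsign_singleton_left bsign_singleton_right split: if_splits)
  have "B - {i} = {a\<in>B. i < a} \<union> {a\<in>B. a < i}" by auto
  moreover have "finite B" using B finite_subset by blast
  ultimately have "card (B - {i}) = card {a\<in>B. i < a} + card {a\<in>B. a < i}"
    by (simp add: card_Un_disjoint disjoint_iff)
  with signs show ?thesis
    by (cases "even (card {a\<in>B. i < a})"; cases "even (card {a\<in>B. a < i})") auto
qed

lemma clcenter_coeff_eq_0:
  fixes z :: "'a::field_char_0 mv"
  assumes z: "z \<in> clcenter n eta" and eta: "\<And>i. i < n \<Longrightarrow> eta i \<noteq> 0"
    and "B \<noteq> {}" and "B \<noteq> {..<n} \<or> even n"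
  shows "z B = 0"
proof (rule ccontr)
  assume zB: "z B \<noteq> 0"
  then have B: "B \<subseteq> {..<n}" using z unfolding clcenter_def cl_def by blast
  then have "finite B" using finite_subset by blast
  show False
  proof (cases "even (card B)")
    case True
    obtain i where "i \<in> B" using \<open>B \<noteq> {}\<close> by blast
    then have "odd (card (B - {i}))" using True \<open>finite B\<close> \<open>B \<noteq> {}\<close>
      by (simp add: card_Diff_singleton card_gt_0_iff)
    with clcenter_coeff_parity[OF z _ eta zB] B \<open>i \<in> B\<close> show False by blast
  next
    case False
    then have "B \<noteq> {..<n}" using assms(4) by auto
    with B obtain i where "i < n" "i \<notin> B" by blast
    from \<open>i \<notin> B\<close> have "B - {i} = B" by simp
    with clcenter_coeff_parity[OF z \<open>i < n\<close> eta zB] False \<open>i < n\<close> show False by simp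
  qed
qed

lemma clcenter_eq_clscal:
  fixes z :: "'a::field_char_0 mv"
  assumes "z \<in> clcenter n eta" "\<And>i. i < n \<Longrightarrow> eta i \<noteq> 0" "even n"
  shows "z = clscal (z {})"
  using clcenter_coeff_eq_0[OF assms(1,2)] assms(3) by (auto simp: clscal_def)

lemma clcenter_3_eq_scal_e012:
  fixes z :: "'a::field_char_0 mv"
  assumes "z \<in> clcenter 3 eta" "\<And>i. i < 3 \<Longrightarrow> eta i \<noteq> 0"
  shows "z = scal_e012 (z {}) (z {0, 1, 2})"
proof
  fix B
  have "{..<3::nat} = {0, 1, 2}" by auto
  then have "B \<noteq> {} \<Longrightarrow> B \<noteq> {0, 1, 2} \<Longrightarrow> z B = 0"
    using clcenter_coeff_eq_0[OF assms, of B] by simp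
  then show "z B = scal_e012 (z {}) (z {0, 1, 2}) B"
    by (simp add: scal_e012_def)
qed

lemma bsign_e012: "bsign eta {0, 1, 2} {0, 1, 2} = - (eta 0 * eta 1 * eta 2)"
proof -
  have "{(a, b). a \<in> {0, 1, 2} \<and> b \<in> {0, 1, 2} \<and> b < (a::nat)} = {(1, 0), (2, 0), (2, 1)}"
    by auto
  then have "card {(a, b). a \<in> {0, 1, 2} \<and> b \<in> {0, 1, 2} \<and> b < (a::nat)} = 3"
    by simp
  moreover have "(\<Prod>i\<in>{0, 1, 2::nat}. eta i) = eta 0 * eta 1 * eta 2"
    by (simp add: mult.assoc)
  ultimately show ?thesis by (simp add: bsign_def)
qed

lemma clrev_scal_e012 [simp]: "clrev (scal_e012 a b) = scal_e012 a (- b)"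
  by (auto simp: clrev_def scal_e012_def)

lemma scal_e012_eq_0: "A \<noteq> {} \<Longrightarrow> A \<noteq> {0, 1, 2} \<Longrightarrow> scal_e012 a b A = 0"
  by (simp add: scal_e012_def)

lemma clmul_scal_e012:
  assumes "3 \<le> n"
  shows "clmul n eta (scal_e012 a b) (scal_e012 c d) =
    scal_e012 (a * c - b * d * (eta 0 * eta 1 * eta 2)) (a * d + b * c)"
    (is "_ = scal_e012 ?p ?q")
proof (rule cl_ext[OF clmul_in_cl scal_e012_in_cl[OF assms]])
  fix C assume C: "C \<subseteq> {..<n}"
  define E :: "nat set" where "E = {0, 1, 2}"
  have "{{}, E} \<subseteq> Pow {..<n}" using assms by (auto simp: E_def)
  then have prod: "clmul n eta (scal_e012 a b) (scal_e012 c d) C =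
      a * scal_e012 c d C + b * scal_e012 c d (sym_diff E C) * bsign eta E (sym_diff E C)"
    by (subst clmul_apply_support[OF C, where S = "{{}, E}"])
      (auto simp: scal_e012_def E_def split: if_splits)
  consider "C = {}" | "C = E" | "C \<noteq> {}" "C \<noteq> E" by blast
  then show "clmul n eta (scal_e012 a b) (scal_e012 c d) C = scal_e012 ?p ?q C"
  proof cases
    case 1
    then show ?thesis unfolding prod by (simp add: scal_e012_def E_def bsign_e012[simplified])
  next
    case 2
    then show ?thesis unfolding prod by (simp add: scal_e012_def E_def)
  next
    case 3
    then have "sym_diff E C \<noteq> {}" "sym_diff E C \<noteq> E" by auto
    then have "scal_e012 c d (sym_diff E C) = 0"
      unfolding E_def by (rule scal_e012_eq_0)
    moreover have "scal_e012 c d C = 0" "scal_e012 ?p ?q C = 0"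
      using 3 unfolding E_def by (rule scal_e012_eq_0)+
    ultimately show ?thesis unfolding prod by simp
  qed
qed

locale clifford_algebra =
  fixes n :: nat and eta :: "nat \<Rightarrow> 'a::field"
  assumes clmul_assoc: "x \<in> cl n \<Longrightarrow> y \<in> cl n \<Longrightarrow> z \<in> cl n \<Longrightarrow>
      clmul n eta (clmul n eta x y) z = clmul n eta x (clmul n eta y z)"
    and clrev_clmul: "x \<in> cl n \<Longrightarrow> y \<in> cl n \<Longrightarrow>
      clrev (clmul n eta x y) = clmul n eta (clrev y) (clrev x)"
begin

lemma clinvertible_clmul:
  assumes "clinvertible n eta x" "clinvertible n eta y"
  shows "clinvertible n eta (clmul n eta x y)"
proof -
  obtain u where x: "x \<in> cl n" and u: "u \<in> cl n" "clmul n eta x u = clone" "clmul n eta u x = clone"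
    using assms(1) unfolding clinvertible_def by blast
  obtain v where y: "y \<in> cl n" and v: "v \<in> cl n" "clmul n eta y v = clone" "clmul n eta v y = clone"
    using assms(2) unfolding clinvertible_def by blast
  have "clmul n eta (clmul n eta x y) (clmul n eta v u) = clmul n eta x (clmul n eta (clmul n eta y v) u)"
    using x y u(1) v(1) by (simp add: clmul_assoc clmul_in_cl)
  also have "\<dots> = clone"
    using u v by (simp add: clone_eq_clscal clmul_clscal_left)
  finally have right: "clmul n eta (clmul n eta x y) (clmul n eta v u) = clone" .
  have "clmul n eta (clmul n eta v u) (clmul n eta x y) = clmul n eta v (clmul n eta (clmul n eta u x) y)"
    using x y u(1) v(1) by (simp add: clmul_assoc clmul_in_cl)
  also have "\<dots> = clone"
    using y u(3) v(3) by (simp add: clone_eq_clscal clmul_clscal_left)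
  finally have left: "clmul n eta (clmul n eta v u) (clmul n eta x y) = clone" .
  show ?thesis
    unfolding clinvertible_def using right left clmul_in_cl by blast
qed

lemma clinvertible_clrev:
  assumes "clinvertible n eta x"
  shows "clinvertible n eta (clrev x)"
proof -
  obtain u where x: "x \<in> cl n" and u: "u \<in> cl n" "clmul n eta x u = clone" "clmul n eta u x = clone"
    using assms unfolding clinvertible_def by blast
  have "clmul n eta (clrev x) (clrev u) = clrev (clmul n eta u x)"
    by (simp add: clrev_clmul[OF u(1) x])
  then have right: "clmul n eta (clrev x) (clrev u) = clone"
    using u(3) by (simp add: clone_eq_clscal)
  have "clmul n eta (clrev u) (clrev x) = clrev (clmul n eta x u)"
    by (simp add: clrev_clmul[OF x u(1)])
  then have left: "clmul n eta (clrev u) (clrev x) = clone"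
    using u(2) by (simp add: clone_eq_clscal)
  from right left show ?thesis
    unfolding clinvertible_def using x u clrev_in_cl by blast
qed

lemma clinvertible_left_factor:
  assumes "clinvertible n eta (clmul n eta w t)" "w \<in> cl n" "clinvertible n eta t"
  shows "clinvertible n eta w"
proof -
  obtain u where t: "t \<in> cl n" and u: "u \<in> cl n" "clmul n eta t u = clone" "clmul n eta u t = clone"
    using assms(3) unfolding clinvertible_def by blast
  have "clinvertible n eta u"
    unfolding clinvertible_def using t u by blast
  moreover have "clmul n eta (clmul n eta w t) u = w"
    using assms(2) t u by (simp add: clmul_assoc clone_eq_clscal clmul_clscal_right)
  ultimately show ?thesis
    using clinvertible_clmul[OF assms(1)] by metis
qed

lemma Pset_memI:
  assumes x: "x \<in> even_part n \<union> odd_part n" and T: "clinvertible n eta T"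
    and sq: "clmul n eta (clrev x) x = clscal c" "clmul n eta x (clrev x) = clscal c" "c \<noteq> 0"
    and w: "w \<in> clcenter n eta" "clmul n eta w x = clscale c T"
  shows "T \<in> Pset n eta"
proof -
  have "x \<in> cl n" using x unfolding even_part_def odd_part_def by blast
  then have x_inv: "clinvertible n eta x" using clinvertible_rev_square sq by blast
  define w' where "w' = clscale (1 / c) w"
  have "w' \<in> clcenter n eta" unfolding w'_def using w(1) by (rule clscale_in_center)
  moreover have T_eq: "T = clmul n eta w' x"
    unfolding w'_def using w(2) sq(3) by (simp add: clmul_clscale_left)
  moreover have "clinvertible n eta w'"
    using clinvertible_left_factor[OF _ _ x_inv] T T_eq \<open>w' \<in> clcenter n eta\<close>
    unfolding clcenter_def by blast
  ultimately show ?thesis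
    unfolding Pset_def units_in_def using x x_inv by blast
qed

lemma Pset_subset_Aset:
  assumes homogeneous: "\<And>t. t \<in> even_part n \<union> odd_part n \<Longrightarrow> \<exists>c. clmul n eta (clrev t) t = clscal c"
    and central: "\<And>w. w \<in> clcenter n eta \<Longrightarrow> \<exists>c. clmul n eta (clrev w) w = clscal c"
    and T: "T \<in> Pset n eta"
  shows "T \<in> Aset n eta"
proof -
  obtain w t where T_eq: "T = clmul n eta w t"
    and w: "w \<in> clcenter n eta" "clinvertible n eta w"
    and t: "t \<in> even_part n \<union> odd_part n" "clinvertible n eta t"
    using T unfolding Pset_def units_in_def by blast
  have "w \<in> cl n" using w(1) unfolding clcenter_def by blast
  have "t \<in> cl n" using t(1) unfolding even_part_def odd_part_def by blast
  obtain a where a: "clmul n eta (clrev w) w = clscal a" using central[OF w(1)] by blast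
  obtain b where b: "clmul n eta (clrev t) t = clscal b" using homogeneous[OF t(1)] by blast
  have T_inv: "clinvertible n eta T" using clinvertible_clmul[OF w(2) t(2)] T_eq by simp
  have "clmul n eta (clrev T) T = clmul n eta (clrev t) (clmul n eta (clmul n eta (clrev w) w) t)"
    using T_eq \<open>w \<in> cl n\<close> \<open>t \<in> cl n\<close> by (simp add: clrev_clmul clmul_assoc clrev_in_cl clmul_in_cl)
  also have "\<dots> = clscal (a * b)"
    using \<open>t \<in> cl n\<close> by (simp add: a b clmul_clscal_left clmul_clscale_right mult.commute)
  finally have "clmul n eta (clrev T) T = clscal (a * b)" .
  moreover have "clinvertible n eta (clmul n eta (clrev T) T)"
    using clinvertible_clmul[OF clinvertible_clrev[OF T_inv] T_inv] .
  ultimately show ?thesis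
    unfolding Aset_def units_in_def using T_inv clscal_in_center
    unfolding clinvertible_def by auto
qed

end

locale low_dim_clifford = clifford_algebra +
  assumes rev_square_homogeneous: "t \<in> even_part n \<union> odd_part n \<Longrightarrow>
      clmul n eta (clrev t) t = clscal (clnorm n eta t) \<and> clmul n eta t (clrev t) = clscal (clnorm n eta t)"
    and rev_square_central: "w \<in> clcenter n eta \<Longrightarrow>
      clmul n eta (clrev w) w = clscal (clnorm n eta w)"
    and central_rev_square: "T \<in> cl n \<Longrightarrow> clmul n eta (clrev T) T \<in> clcenter n eta \<Longrightarrow>
      clmul n eta (clrev T) T = clscal (clnorm n eta (even_comp T) + clnorm n eta (odd_comp T))"
    and central_rev_square_factor: "T \<in> cl n \<Longrightarrow> clmul n eta (clrev T) T \<in> clcenter n eta \<Longrightarrow>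
      (\<exists>w\<in>clcenter n eta. clmul n eta w (even_comp T) = clscale (clnorm n eta (even_comp T)) T) \<and>
      (\<exists>w\<in>clcenter n eta. clmul n eta w (odd_comp T) = clscale (clnorm n eta (odd_comp T)) T)"
begin

lemma Aset_subset_Pset:
  assumes "T \<in> Aset n eta"
  shows "T \<in> Pset n eta"
proof -
  have T: "T \<in> cl n" "clinvertible n eta T"
    and S: "clmul n eta (clrev T) T \<in> clcenter n eta" "clinvertible n eta (clmul n eta (clrev T) T)"
    using assms unfolding Aset_def units_in_def by auto
  define X V where "X = even_comp T" and "V = odd_comp T"
  have X: "X \<in> even_part n \<union> odd_part n" and V: "V \<in> even_part n \<union> odd_part n"
    unfolding X_def V_def using T(1) even_comp_in_even_part odd_comp_in_odd_part by blast+
  have "clnorm n eta X + clnorm n eta V \<noteq> 0"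
    using S(2) central_rev_square[OF T(1) S(1)] clinvertible_clscal_nonzero
    unfolding X_def V_def by metis
  then consider "clnorm n eta X \<noteq> 0" | "clnorm n eta V \<noteq> 0" by force
  then show ?thesis
  proof cases
    case 1
    obtain w where "w \<in> clcenter n eta" "clmul n eta w X = clscale (clnorm n eta X) T"
      using central_rev_square_factor[OF T(1) S(1)] unfolding X_def by blast
    with 1 show ?thesis using Pset_memI[OF X T(2)] rev_square_homogeneous[OF X] by blast
  next
    case 2
    obtain w where "w \<in> clcenter n eta" "clmul n eta w V = clscale (clnorm n eta V) T"
      using central_rev_square_factor[OF T(1) S(1)] unfolding V_def by blast
    with 2 show ?thesis using Pset_memI[OF V T(2)] rev_square_homogeneous[OF V] by blast
  qed
qed

theorem Aset_eq_Qset_eq_Pset: "Aset n eta = Qset n eta \<and> Qset n eta = Pset n eta"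
proof -
  have "Pset n eta \<subseteq> Aset n eta"
    using Pset_subset_Aset rev_square_homogeneous rev_square_central by blast
  then show ?thesis
    using Aset_subset_Pset unfolding Qset_def Aset_def by blast
qed

end

definition slice :: "nat \<Rightarrow> nat \<Rightarrow> nat set \<Rightarrow> nat set" where
  "slice m n S = S \<inter> {m..<n}"

lemma slice_less: "m < n \<Longrightarrow> slice m n S = (if m \<in> S then insert m (slice (m + 1) n S) else slice (m + 1) n S)"
  unfolding slice_def by (auto simp: Suc_le_eq le_less)

lemma slice_ge: "\<not> m < n \<Longrightarrow> slice m n S = {}"
  unfolding slice_def by auto

lemma clmul_eval:
  assumes "C \<subseteq> {..<n}"
  shows "clmul n eta x y C =
    (\<Sum>A\<in>Pow {0..<n}. x A * y (slice 0 n (sym_diff A C)) * bsign eta A (slice 0 n (sym_diff A C)))"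
  unfolding clmul_apply[OF assms] atLeast0LessThan
proof (rule sum.cong[OF refl])
  fix A assume "A \<in> Pow {..<n}"
  with assms have "slice 0 n (sym_diff A C) = sym_diff A C" by (auto simp: slice_def)
  then show "x A * y (sym_diff A C) * bsign eta A (sym_diff A C) =
      x A * y (slice 0 n (sym_diff A C)) * bsign eta A (slice 0 n (sym_diff A C))" by simp
qed

lemma sum_Pow_insert:
  assumes "m < n"
  shows "(\<Sum>A\<in>Pow {m::nat..<n}. f A) = (\<Sum>A\<in>Pow {m + 1..<n}. f A) + (\<Sum>A\<in>Pow {m + 1..<n}. f (insert m A))"
proof -
  have "{m..<n} = insert m {Suc m..<n}" using assms by auto
  moreover have "Pow {Suc m..<n} \<inter> insert m ` Pow {Suc m..<n} = {}" by auto
  moreover have "inj_on (insert m) (Pow {Suc m..<n})"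
    by (rule inj_onI) (metis Diff_insert_absorb PowD atLeastLessThan_iff not_less_eq_eq order_refl subset_iff)
  ultimately show ?thesis
    unfolding Suc_eq_plus1[symmetric] by (simp add: Pow_insert sum.union_disjoint sum.reindex)
qed

lemma sum_Pow_empty: "(\<Sum>A\<in>Pow {n::nat..<n}. f A) = f {}"
proof -
  have "Pow {n..<n} = {{}}" by auto
  then show ?thesis by simp
qed

lemma ball_Pow_insert:
  assumes "m < n"
  shows "(\<forall>A\<in>Pow {m::nat..<n}. P A) \<longleftrightarrow> (\<forall>A\<in>Pow {m + 1..<n}. P A) \<and> (\<forall>A\<in>Pow {m + 1..<n}. P (insert m A))"
proof -
  have "{m..<n} = insert m {Suc m..<n}" using assms by auto
  then show ?thesis unfolding Suc_eq_plus1[symmetric] by (auto simp: Pow_insert)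
qed

lemma ball_Pow_empty: "(\<forall>A\<in>Pow {n::nat..<n}. P A) \<longleftrightarrow> P {}"
proof -
  have "Pow {n..<n} = {{}}" by auto
  then show ?thesis by simp
qed

lemma bsign_eval:
  assumes "finite A" "finite B"
  shows "bsign eta A B =
    (if even (\<Sum>a\<in>A. \<Sum>b\<in>B. if b < a then 1 else 0::nat) then 1 else -1) * (\<Prod>i\<in>A \<inter> B. eta i)"
proof -
  have "{(a, b). a \<in> A \<and> b \<in> B \<and> b < a} = (SIGMA a:A. {b\<in>B. b < a})" by auto
  then have "card {(a, b). a \<in> A \<and> b \<in> B \<and> b < a} = (\<Sum>a\<in>A. card {b\<in>B. b < a})"
    using assms by (simp add: card_SigmaI)
  also have "\<dots> = (\<Sum>a\<in>A. \<Sum>b\<in>B. if b < a then 1 else 0)"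
    using assms by (simp add: sum.inter_filter[symmetric])
  finally have "card {(a, b). a \<in> A \<and> b \<in> B \<and> b < a} = (\<Sum>a\<in>A. \<Sum>b\<in>B. if b < a then 1 else 0)" .
  then show ?thesis unfolding bsign_def by simp
qed

lemma cl_eqI:
  assumes "x \<in> cl n" "y \<in> cl n" "\<forall>A\<in>Pow {0..<n}. x A = y A"
  shows "x = y"
proof (rule cl_ext[OF assms(1,2)])
  fix A assume "A \<subseteq> {..<n}"
  then have "A \<in> Pow {0..<n}" by auto
  with assms(3) show "x A = y A" by blast
qed

lemmas clmul_eval_simps = clmul_eval sum_Pow_insert sum_Pow_empty slice_less slice_ge bsign_eval

lemma clmul3_table:
  shows "clmul 3 eta x y {} = x {} * y {} + x {0} * y {0} * eta 0 + x {1} * y {1} * eta 1 + x {2} * y {2} * eta 2 - x {0,1} * y {0,1} * eta 0 * eta 1 - x {0,2} * y {0,2} * eta 0 * eta 2 - x {1,2} * y {1,2} * eta 1 * eta 2 - x {0,1,2} * y {0,1,2} * eta 0 * eta 1 * eta 2"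
    and "clmul 3 eta x y {0} = x {} * y {0} + x {0} * y {} - x {1} * y {0,1} * eta 1 - x {2} * y {0,2} * eta 2 + x {0,1} * y {1} * eta 1 + x {0,2} * y {2} * eta 2 - x {1,2} * y {0,1,2} * eta 1 * eta 2 - x {0,1,2} * y {1,2} * eta 1 * eta 2"
    and "clmul 3 eta x y {1} = x {} * y {1} + x {0} * y {0,1} * eta 0 + x {1} * y {} - x {2} * y {1,2} * eta 2 - x {0,1} * y {0} * eta 0 + x {0,2} * y {0,1,2} * eta 0 * eta 2 + x {1,2} * y {2} * eta 2 + x {0,1,2} * y {0,2} * eta 0 * eta 2"
    and "clmul 3 eta x y {2} = x {} * y {2} + x {0} * y {0,2} * eta 0 + x {1} * y {1,2} * eta 1 + x {2} * y {} - x {0,1} * y {0,1,2} * eta 0 * eta 1 - x {0,2} * y {0} * eta 0 - x {1,2} * y {1} * eta 1 - x {0,1,2} * y {0,1} * eta 0 * eta 1"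
    and "clmul 3 eta x y {0,1} = x {} * y {0,1} + x {0} * y {1} - x {1} * y {0} + x {2} * y {0,1,2} * eta 2 + x {0,1} * y {} - x {0,2} * y {1,2} * eta 2 + x {1,2} * y {0,2} * eta 2 + x {0,1,2} * y {2} * eta 2"
    and "clmul 3 eta x y {0,2} = x {} * y {0,2} + x {0} * y {2} - x {1} * y {0,1,2} * eta 1 - x {2} * y {0} + x {0,1} * y {1,2} * eta 1 + x {0,2} * y {} - x {1,2} * y {0,1} * eta 1 - x {0,1,2} * y {1} * eta 1"
    and "clmul 3 eta x y {1,2} = x {} * y {1,2} + x {0} * y {0,1,2} * eta 0 + x {1} * y {2} - x {2} * y {1} - x {0,1} * y {0,2} * eta 0 + x {0,2} * y {0,1} * eta 0 + x {1,2} * y {} + x {0,1,2} * y {0} * eta 0"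
    and "clmul 3 eta x y {0,1,2} = x {} * y {0,1,2} + x {0} * y {1,2} - x {1} * y {0,2} + x {2} * y {0,1} + x {0,1} * y {2} - x {0,2} * y {1} + x {1,2} * y {0} + x {0,1,2} * y {}"
  by (simp_all add: clmul_eval_simps del: One_nat_def)


lemma even_part_coeff: "t \<in> even_part n \<Longrightarrow> odd (card A) \<Longrightarrow> t A = 0"
  and odd_part_coeff: "t \<in> odd_part n \<Longrightarrow> even (card A) \<Longrightarrow> t A = 0"
  unfolding even_part_def odd_part_def by blast+

lemma scal_e012_zero [simp]: "scal_e012 a 0 = clscal a"
  by (auto simp: scal_e012_def clscal_def)

lemma scal_e012_eval:
  assumes "A \<subseteq> {0, 1, 2}"
  shows "scal_e012 a b A = (if card A = 0 then a else if card A = 3 then b else 0)"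
proof (cases "A = {}")
  case False
  moreover have "finite A" using assms finite_subset by blast
  moreover have "card A = 3 \<longleftrightarrow> A = {0, 1, 2}"
  proof
    show "card A = 3 \<Longrightarrow> A = {0, 1, 2}" using assms by (intro card_subset_eq) simp_all
  qed simp
  ultimately show ?thesis by (simp add: scal_e012_def)
qed (simp add: scal_e012_def)

lemmas coord_simps = ball_Pow_insert ball_Pow_empty clrev_def clscal_def clscale_def clone_def
  even_comp_def odd_comp_def scal_e012_eval clnorm_def

lemma clifford_algebra_3: "clifford_algebra 3 eta"
proof
  fix x y z :: "'a mv"
  show "clmul 3 eta (clmul 3 eta x y) z = clmul 3 eta x (clmul 3 eta y z)"
    by (rule cl_eqI[OF clmul_in_cl clmul_in_cl])
      (simp add: clmul3_table coord_simps algebra_simps del: One_nat_def)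
  show "clrev (clmul 3 eta x y) = clmul 3 eta (clrev y) (clrev x)"
    by (rule cl_eqI[OF clrev_in_cl[OF clmul_in_cl] clmul_in_cl])
      (simp add: clmul3_table coord_simps del: One_nat_def)
qed

lemma scal_e012_in_center_3: "scal_e012 a b \<in> clcenter 3 eta"
  unfolding clcenter_def
proof (intro CollectI conjI ballI scal_e012_in_cl order_refl)
  fix x :: "'a mv"
  show "clmul 3 eta (scal_e012 a b) x = clmul 3 eta x (scal_e012 a b)"
    by (rule cl_eqI[OF clmul_in_cl clmul_in_cl]) (simp add: clmul3_table coord_simps del: One_nat_def)
qed


lemma low_dim_clifford_3:
  fixes eta :: "nat \<Rightarrow> 'a::field_char_0"
  assumes eta: "\<And>i. eta i \<noteq> 0"
  shows "low_dim_clifford 3 eta"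
proof -
  have center: "z = scal_e012 (z {}) (z {0, 1, 2})" if "z \<in> clcenter 3 eta" for z
    using clcenter_3_eq_scal_e012 that eta by blast
  show ?thesis
  proof (intro low_dim_clifford.intro low_dim_clifford_axioms.intro clifford_algebra_3)
    fix t :: "'a mv" assume "t \<in> even_part 3 \<union> odd_part 3"
    then consider (even) "t \<in> even_part 3" | (odd) "t \<in> odd_part 3" by blast
    then show "clmul 3 eta (clrev t) t = clscal (clnorm 3 eta t) \<and>
        clmul 3 eta t (clrev t) = clscal (clnorm 3 eta t)"
    proof cases
      case even
      then show ?thesis
        by (intro conjI cl_eqI[OF clmul_in_cl clscal_in_cl])
          (simp_all add: clmul3_table coord_simps even_part_coeff[OF even] del: One_nat_def)
    next
      case odd
      then show ?thesis
        by (intro conjI cl_eqI[OF clmul_in_cl clscal_in_cl])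
          (simp_all add: clmul3_table coord_simps odd_part_coeff[OF odd] del: One_nat_def)
    qed
  next
    fix w :: "'a mv" assume "w \<in> clcenter 3 eta"
    then have "clmul 3 eta (clrev w) w =
        clmul 3 eta (scal_e012 (w {}) (- w {0, 1, 2})) (scal_e012 (w {}) (w {0, 1, 2}))"
      by (subst (1 2) center) simp_all
    also have "\<dots> = clscal (w {} * w {} + w {0, 1, 2} * w {0, 1, 2} * (eta 0 * eta 1 * eta 2))"
      by (simp add: clmul_scal_e012)
    finally show "clmul 3 eta (clrev w) w = clscal (clnorm 3 eta w)"
      by (simp add: clnorm_def clscal_def)
  next
    fix T :: "'a mv" assume T: "T \<in> cl 3" and S: "clmul 3 eta (clrev T) T \<in> clcenter 3 eta"
    have "clmul 3 eta (clrev T) T {0, 1, 2} = 0"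
      "clmul 3 eta (clrev T) T {} = clnorm 3 eta (even_comp T) + clnorm 3 eta (odd_comp T)"
      by (simp_all add: clmul3_table coord_simps del: One_nat_def)
    then show "clmul 3 eta (clrev T) T = clscal (clnorm 3 eta (even_comp T) + clnorm 3 eta (odd_comp T))"
      using center[OF S] by simp
  next
    fix T :: "'a mv" assume T: "T \<in> cl 3" and S: "clmul 3 eta (clrev T) T \<in> clcenter 3 eta"
    define mu where "mu = clmul 3 eta (clrev (even_comp T)) (odd_comp T) {0, 1, 2}"
    have S0: "clmul 3 eta (clrev T) T {0} = 0" "clmul 3 eta (clrev T) T {1} = 0"
      "clmul 3 eta (clrev T) T {2} = 0"
      by (subst center[OF S]; simp add: scal_e012_eval del: One_nat_def)+
    have "clmul 3 eta (scal_e012 (clnorm 3 eta (even_comp T)) mu) (even_comp T) =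
        clscale (clnorm 3 eta (even_comp T)) T"
      using T S0 unfolding mu_def
      by (intro cl_eqI[OF clmul_in_cl clscale_in_cl[OF T]])
        (simp add: clmul3_table coord_simps del: One_nat_def, intro conjI; algebra)
    moreover have "clmul 3 eta (scal_e012 (clnorm 3 eta (odd_comp T)) (- mu)) (odd_comp T) =
        clscale (clnorm 3 eta (odd_comp T)) T"
      using T S0 unfolding mu_def
      by (intro cl_eqI[OF clmul_in_cl clscale_in_cl[OF T]])
        (simp add: clmul3_table coord_simps del: One_nat_def, intro conjI; algebra)
    ultimately show "(\<exists>w\<in>clcenter 3 eta. clmul 3 eta w (even_comp T) = clscale (clnorm 3 eta (even_comp T)) T) \<and>
        (\<exists>w\<in>clcenter 3 eta. clmul 3 eta w (odd_comp T) = clscale (clnorm 3 eta (odd_comp T)) T)"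
      using scal_e012_in_center_3 by blast
  qed
qed

lemma clmul2_table:
  shows "clmul 2 eta x y {} = x {} * y {} + x {0} * y {0} * eta 0 + x {1} * y {1} * eta 1 - x {0,1} * y {0,1} * eta 0 * eta 1"
    and "clmul 2 eta x y {0} = x {} * y {0} + x {0} * y {} - x {1} * y {0,1} * eta 1 + x {0,1} * y {1} * eta 1"
    and "clmul 2 eta x y {1} = x {} * y {1} + x {0} * y {0,1} * eta 0 + x {1} * y {} - x {0,1} * y {0} * eta 0"
    and "clmul 2 eta x y {0,1} = x {} * y {0,1} + x {0} * y {1} - x {1} * y {0} + x {0,1} * y {}"
  by (simp_all add: clmul_eval_simps del: One_nat_def)

lemma clifford_algebra_2: "clifford_algebra 2 eta"
proof
  fix x y z :: "'a mv"
  show "clmul 2 eta (clmul 2 eta x y) z = clmul 2 eta x (clmul 2 eta y z)"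
    by (rule cl_eqI[OF clmul_in_cl clmul_in_cl])
      (simp add: clmul2_table coord_simps algebra_simps del: One_nat_def)
  show "clrev (clmul 2 eta x y) = clmul 2 eta (clrev y) (clrev x)"
    by (rule cl_eqI[OF clrev_in_cl[OF clmul_in_cl] clmul_in_cl])
      (simp add: clmul2_table coord_simps del: One_nat_def)
qed

lemma low_dim_clifford_2:
  fixes eta :: "nat \<Rightarrow> 'a::field_char_0"
  assumes eta: "\<And>i. eta i \<noteq> 0"
  shows "low_dim_clifford 2 eta"
proof -
  have center: "z = clscal (z {})" if "z \<in> clcenter 2 eta" for z
    using clcenter_eq_clscal that eta by fastforce
  show ?thesis
  proof (intro low_dim_clifford.intro low_dim_clifford_axioms.intro clifford_algebra_2)
    fix t :: "'a mv" assume "t \<in> even_part 2 \<union> odd_part 2"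
    then consider (even) "t \<in> even_part 2" | (odd) "t \<in> odd_part 2" by blast
    then show "clmul 2 eta (clrev t) t = clscal (clnorm 2 eta t) \<and>
        clmul 2 eta t (clrev t) = clscal (clnorm 2 eta t)"
    proof cases
      case even
      then show ?thesis
        by (intro conjI cl_eqI[OF clmul_in_cl clscal_in_cl])
          (simp_all add: clmul2_table coord_simps even_part_coeff[OF even] del: One_nat_def)
    next
      case odd
      then show ?thesis
        by (intro conjI cl_eqI[OF clmul_in_cl clscal_in_cl])
          (simp_all add: clmul2_table coord_simps odd_part_coeff[OF odd] del: One_nat_def)
    qed
  next
    fix w :: "'a mv" assume "w \<in> clcenter 2 eta"
    then have "clmul 2 eta (clrev w) w = clscal (w {} * w {})"
      by (subst (1 2) center) simp_all
    then show "clmul 2 eta (clrev w) w = clscal (clnorm 2 eta w)"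
      by (simp add: clnorm_def clscal_def)
  next
    fix T :: "'a mv" assume T: "T \<in> cl 2" and S: "clmul 2 eta (clrev T) T \<in> clcenter 2 eta"
    have "clmul 2 eta (clrev T) T {} = clnorm 2 eta (even_comp T) + clnorm 2 eta (odd_comp T)"
      by (simp add: clmul2_table coord_simps del: One_nat_def)
    then show "clmul 2 eta (clrev T) T = clscal (clnorm 2 eta (even_comp T) + clnorm 2 eta (odd_comp T))"
      using center[OF S] by simp
  next
    fix T :: "'a mv" assume T: "T \<in> cl 2" and S: "clmul 2 eta (clrev T) T \<in> clcenter 2 eta"
    have S0: "clmul 2 eta (clrev T) T {0} = 0" "clmul 2 eta (clrev T) T {1} = 0"
      by (subst center[OF S]; simp add: clscal_def)+
    have "clmul 2 eta (clscal (clnorm 2 eta (even_comp T))) (even_comp T) =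
        clscale (clnorm 2 eta (even_comp T)) T"
      using T S0
      by (intro cl_eqI[OF clmul_in_cl clscale_in_cl[OF T]])
        (simp add: clmul2_table coord_simps del: One_nat_def, intro conjI; algebra)
    moreover have "clmul 2 eta (clscal (clnorm 2 eta (odd_comp T))) (odd_comp T) =
        clscale (clnorm 2 eta (odd_comp T)) T"
      using T S0
      by (intro cl_eqI[OF clmul_in_cl clscale_in_cl[OF T]])
        (simp add: clmul2_table coord_simps del: One_nat_def, intro conjI; algebra)
    ultimately show "(\<exists>w\<in>clcenter 2 eta. clmul 2 eta w (even_comp T) = clscale (clnorm 2 eta (even_comp T)) T) \<and>
        (\<exists>w\<in>clcenter 2 eta. clmul 2 eta w (odd_comp T) = clscale (clnorm 2 eta (odd_comp T)) T)"
      using clscal_in_center by blast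
  qed
qed


lemma Qset_ne_Aset:
  fixes eta :: "nat \<Rightarrow> 'a::field_char_0"
  assumes n: "even n" "3 \<le> n" and eta: "\<And>i. eta i = 1 \<or> eta i = -1"
  shows "Qset n eta \<noteq> Aset n eta"
proof -
  define T :: "'a mv" where "T = scal_e012 1 2"
  define c where "c = 1 + 4 * (eta 0 * eta 1 * eta 2)"
  have "eta 0 * eta 1 * eta 2 = 1 \<or> eta 0 * eta 1 * eta 2 = -1"
    using eta[of 0] eta[of 1] eta[of 2] by auto
  then have "c \<noteq> 0" unfolding c_def by auto
  have T_cl: "T \<in> cl n" unfolding T_def using n(2) by (rule scal_e012_in_cl)
  have sq: "clmul n eta (clrev T) T = clscal c" "clmul n eta T (clrev T) = clscal c"
    unfolding T_def c_def using n(2) by (simp_all add: clmul_scal_e012)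
  have T_inv: "clinvertible n eta T"
    using clinvertible_rev_square[OF T_cl sq \<open>c \<noteq> 0\<close>] .
  have "T \<in> Aset n eta"
    unfolding Aset_def units_in_def
    using T_cl T_inv sq clscal_in_center clinvertible_clscal[OF \<open>c \<noteq> 0\<close>] by simp
  moreover have "T \<notin> Pset n eta"
  proof
    assume "T \<in> Pset n eta"
    then obtain w t where T_eq: "T = clmul n eta w t" and w: "w \<in> clcenter n eta"
      and t: "t \<in> even_part n \<union> odd_part n"
      unfolding Pset_def units_in_def by blast
    have "w = clscal (w {})"
      using clcenter_eq_clscal[OF w _ n(1)] eta by (metis zero_neq_one neg_0_equal_iff_equal)
    moreover have "t \<in> cl n" using t unfolding even_part_def odd_part_def by blast
    ultimately have "T = clscale (w {}) t"
      using T_eq clmul_clscal_left by metis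
    then have "T {} = w {} * t {}" "T {0, 1, 2} = w {} * t {0, 1, 2}"
      by (simp_all add: clscale_def)
    then have "w {} * t {} = 1" "w {} * t {0, 1, 2} = 2"
      by (simp_all add: T_def scal_e012_def)
    then have "t {} \<noteq> 0" "t {0, 1, 2} \<noteq> 0" by auto
    with t show False
      using even_part_coeff[of t n "{0, 1, 2}"] odd_part_coeff[of t n "{}"] by auto
  qed
  ultimately show ?thesis unfolding Qset_def by blast
qed


lemma Aset_Qset_Pset_small_dim:
  fixes eta :: "nat \<Rightarrow> 'a::field_char_0"
  assumes eta: "\<And>i. eta i = 1 \<or> eta i = -1"
  shows "(2 \<le> n \<and> n \<le> 3 \<longrightarrow> Aset n eta = Qset n eta \<and> Qset n eta = Pset n eta) \<and>
    (n = 4 \<longrightarrow> Qset n eta \<noteq> Aset n eta)"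
proof (rule conjI; intro impI)
  have "eta i \<noteq> 0" for i using eta[of i] by auto
  then have "low_dim_clifford 2 eta" "low_dim_clifford 3 eta"
    by (simp_all add: low_dim_clifford_2 low_dim_clifford_3)
  moreover assume "2 \<le> n \<and> n \<le> 3"
  then have "n = 2 \<or> n = 3" by linarith
  ultimately show "Aset n eta = Qset n eta \<and> Qset n eta = Pset n eta"
    using low_dim_clifford.Aset_eq_Qset_eq_Pset by blast
next
  assume "n = 4"
  then show "Qset n eta \<noteq> Aset n eta" by (simp add: Qset_ne_Aset eta)
qed

theorem mainTheorem15:
  shows "(\<forall>p q :: nat. let n = p + q; eta = (sig p :: nat \<Rightarrow> real) in
            (2 \<le> n \<and> n \<le> 3 \<longrightarrow> Aset n eta = Qset n eta \<and> Qset n eta = Pset n eta) \<and>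
            (n = 4 \<longrightarrow> Qset n eta \<noteq> Aset n eta))
       \<and> (\<forall>n :: nat. let eta = (\<lambda>_. 1) :: nat \<Rightarrow> complex in
            (2 \<le> n \<and> n \<le> 3 \<longrightarrow> Aset n eta = Qset n eta \<and> Qset n eta = Pset n eta) \<and>
            (n = 4 \<longrightarrow> Qset n eta \<noteq> Aset n eta))"
  unfolding Let_def
  by (intro conjI[OF allI allI] allI Aset_Qset_Pset_small_dim) (simp_all add: sig_def)

end
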